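(* Let $G$ be a bipartite graph with bipartition $(X,Y)$, $|X| = n\geq 2$, $|Y|=m$, every $x\in X$ having degree at least $\delta$. Let $(C,x)$ be a tight pair in $G$, with $C = y_1x_1y_2x_2\ldots y_\ell x_\ell y_1$ where $x_i \in X$, $y_i\in Y$. If $i \neq j$ and $y_i, y_j \in N(x)$, then $N(x_i)\setminus V(C)$ and $N(x_j)\setminus V(C)$ are disjoint.
   Context: A tight pair in $G$ is a pair $(C,x)$ where $C$ is a longest cycle in $G$ and $x \in X \setminus V(C)$, chosen such that $|N(x)\cap V(C)|$ is maximum over all pairs $(C',x')$ with $C'$ a longest cycle in $G$ and $x' \in X\setminus V(C')$. *)

theory Defs
  imports Main
begin

definition bipartite_graph :: "'a set \<Rightarrow> ('a \<Rightarrow> 'a \<Rightarrow> bool) \<Rightarrow> 'a set \<Rightarrow> 'a set \<Rightarrow> bool" where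
  "bipartite_graph V E X Y \<longleftrightarrow>
     finite V \<and> (\<forall>u v. E u v \<longrightarrow> E v u) \<and> (\<forall>v. \<not> E v v) \<and>
     (\<forall>u v. E u v \<longrightarrow> u \<in> V \<and> v \<in> V) \<and>
     X \<inter> Y = {} \<and> X \<union> Y = V \<and>
     (\<forall>u v. E u v \<longrightarrow> (u \<in> X \<and> v \<in> Y) \<or> (u \<in> Y \<and> v \<in> X))"

definition nbhd :: "('a \<Rightarrow> 'a \<Rightarrow> bool) \<Rightarrow> 'a \<Rightarrow> 'a set" where
  "nbhd E v = {u. E v u}"

definition is_cycle :: "('a \<Rightarrow> 'a \<Rightarrow> bool) \<Rightarrow> 'a list \<Rightarrow> bool" where
  "is_cycle E C \<longleftrightarrow> length C \<ge> 3 \<and> distinct C \<and>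
     (\<forall>i < length C. E (C ! i) (C ! ((i + 1) mod length C)))"

definition longest_cycle :: "('a \<Rightarrow> 'a \<Rightarrow> bool) \<Rightarrow> 'a list \<Rightarrow> bool" where
  "longest_cycle E C \<longleftrightarrow> is_cycle E C \<and> (\<forall>C'. is_cycle E C' \<longrightarrow> length C' \<le> length C)"

definition tight_pair :: "('a \<Rightarrow> 'a \<Rightarrow> bool) \<Rightarrow> 'a set \<Rightarrow> 'a list \<Rightarrow> 'a \<Rightarrow> bool" where
  "tight_pair E X C x \<longleftrightarrow> longest_cycle E C \<and> x \<in> X \<and> x \<notin> set C \<and>
     (\<forall>C' x'. longest_cycle E C' \<and> x' \<in> X \<and> x' \<notin> set C' \<longrightarrow>
        card (nbhd E x' \<inter> set C') \<le> card (nbhd E x \<inter> set C))"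

end

theory Submission
  imports Defs
begin

text \<open>If some vertex z outside the longest cycle C were adjacent to both x_i and x_j,
  then, with x adjacent to y_i and y_j (say i < j), the closed walk
  x, y_i, y_(i-1), ..., y_1, x_l, ..., x_j, z, x_i, y_(i+1), ..., y_j, x
  would be a cycle through all of C together with x and z, hence longer than C.
  Bipartiteness is only needed to see that z differs from x: z lies in Y, x in X.\<close>

lemma is_cycle_iff_successively:
  "is_cycle E C \<longleftrightarrow>
     length C \<ge> 3 \<and> distinct C \<and> successively E C \<and> E (last C) (hd C)"
proof (cases "length C \<ge> 3")
  case True
  define k where "k = length C - 1"
  have len: "length C = Suc k" using True k_def by simp
  have ends: "last C = C ! k" "hd C = C ! 0"
    using len k_def by (simp_all add: last_conv_nth hd_conv_nth flip: length_greater_0_conv)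
  have succ_mod: "Suc i mod Suc k = Suc i" if "i < k" for i
    using that by simp
  have "(\<forall>i < length C. E (C ! i) (C ! ((i + 1) mod length C))) \<longleftrightarrow>
        (\<forall>i < k. E (C ! i) (C ! Suc i)) \<and> E (C ! k) (C ! 0)"
    unfolding len by (auto simp: less_Suc_eq succ_mod)
  then show ?thesis
    using len ends by (simp add: is_cycle_def successively_conv_nth)
qed (simp add: is_cycle_def)

lemma is_cycle_crossing_extension:
  assumes sym: "\<And>u v. E u v \<Longrightarrow> E v u" and cyc: "is_cycle E C"
    and x_out: "x \<notin> set C" and z_out: "z \<notin> set C" and "x \<noteq> z"
    and "p < q" "q + 1 < length C"
    and x_p: "E x (C ! p)" and x_q: "E x (C ! q)"
    and z_p: "E (C ! (p + 1)) z" and z_q: "E (C ! (q + 1)) z"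
  shows "is_cycle E (x # rev (take (p + 1) C) @ rev (drop (q + 1) C) @
                     z # take (q - p) (drop (p + 1) C))"
proof -
  define A where "A = take (p + 1) C"
  define B where "B = take (q - p) (drop (p + 1) C)"
  define R where "R = drop (q + 1) C"
  have C_split: "C = A @ B @ R"
    unfolding A_def B_def R_def using \<open>p < q\<close>
    by (metis add.commute append_take_drop_id drop_drop le_add_diff_inverse2 less_imp_le_nat
        Suc_eq_plus1 Suc_leI)
  have "A \<noteq> []" "B \<noteq> []" "R \<noteq> []"
    using \<open>p < q\<close> \<open>q + 1 < length C\<close> unfolding A_def B_def R_def by auto
  have ends: "hd A = hd C" "hd B = C ! (p + 1)" "hd R = C ! (q + 1)" "last R = last C"
    "last A = C ! p" "last B = C ! q"
    using \<open>p < q\<close> \<open>q + 1 < length C\<close> unfolding A_def B_def R_def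
    by (simp_all add: hd_take last_drop hd_drop_conv_nth)
      (simp_all add: take_Suc_conv_app_nth last_conv_nth)
  have C_walk: "successively E C" "E (last C) (hd C)" and "distinct C"
    using cyc by (auto simp: is_cycle_iff_successively)
  have sym_walk: "successively E (rev W)" if "successively E W" for W
    using that sym by (simp add: successively_mono)
  have walks: "successively E A" "successively E B" "successively E R"
    using C_walk(1) unfolding C_split by (auto simp: successively_append_iff)
  have "successively E (x # rev A @ rev R @ z # B)"
    using sym_walk[OF walks(1)] sym_walk[OF walks(3)] walks(2) C_walk(2)
      \<open>A \<noteq> []\<close> \<open>B \<noteq> []\<close> \<open>R \<noteq> []\<close> ends x_p z_p z_q sym
    by (simp add: successively_append_iff successively_Cons hd_rev last_rev)
  moreover have "distinct (x # rev A @ rev R @ z # B)"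
    using \<open>distinct C\<close> x_out z_out \<open>x \<noteq> z\<close> unfolding C_split by auto
  moreover have "E (last (x # rev A @ rev R @ z # B)) (hd (x # rev A @ rev R @ z # B))"
    using \<open>B \<noteq> []\<close> ends x_q sym by simp
  moreover have "length (x # rev A @ rev R @ z # B) \<ge> 3"
    using C_split \<open>q + 1 < length C\<close> by simp
  ultimately show ?thesis
    unfolding is_cycle_iff_successively A_def B_def R_def by blast
qed

lemma longest_cycle_no_crossing_neighbours:
  assumes sym: "\<And>u v. E u v \<Longrightarrow> E v u" and "longest_cycle E C"
    and "x \<notin> set C" "z \<notin> set C" "x \<noteq> z"
    and "p \<noteq> q" "p + 1 < length C" "q + 1 < length C"
    and "E x (C ! p)" "E x (C ! q)" "E (C ! (p + 1)) z" "E (C ! (q + 1)) z"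
  shows False
proof -
  have "is_cycle E C" and longest: "\<And>D. is_cycle E D \<Longrightarrow> length D \<le> length C"
    using \<open>longest_cycle E C\<close> by (auto simp: longest_cycle_def)
  have "\<exists>D. is_cycle E D \<and> length D = length C + 2"
  proof (cases "p < q")
    case True
    then show ?thesis
      using is_cycle_crossing_extension[OF sym \<open>is_cycle E C\<close>] assms by fastforce
  next
    case False
    then have "q < p" using \<open>p \<noteq> q\<close> by simp
    then show ?thesis
      using is_cycle_crossing_extension[OF sym \<open>is_cycle E C\<close>] assms by fastforce
  qed
  then show False using longest by fastforce
qed

lemma bipartite_graph_edge_side:
  assumes "bipartite_graph V E X Y" "E u v"
  shows "u \<in> X \<longleftrightarrow> v \<notin> X"
  using assms unfolding bipartite_graph_def by blast

theorem claim2: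
  fixes V X Y :: "'a set" and E :: "'a \<Rightarrow> 'a \<Rightarrow> bool" and n m \<delta> i j :: nat
    and C :: "'a list" and x :: 'a
  assumes "bipartite_graph V E X Y"
    and "card X = n" and "n \<ge> 2" and "card Y = m"
    and "\<forall>v\<in>X. card (nbhd E v) \<ge> \<delta>"
    and "tight_pair E X C x"
    and "C ! 0 \<in> Y"
    and "i < length C div 2" and "j < length C div 2" and "i \<noteq> j"
    and "C ! (2 * i) \<in> nbhd E x" and "C ! (2 * j) \<in> nbhd E x"
  shows "(nbhd E (C ! (2 * i + 1)) - set C) \<inter> (nbhd E (C ! (2 * j + 1)) - set C) = {}"
proof (rule ccontr)
  assume "\<not> ?thesis"
  then obtain z where z_i: "E (C ! (2 * i + 1)) z" and z_j: "E (C ! (2 * j + 1)) z"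
    and "z \<notin> set C"
    unfolding nbhd_def by auto
  have sym: "\<And>u v. E u v \<Longrightarrow> E v u"
    using assms(1) unfolding bipartite_graph_def by blast
  have "longest_cycle E C" "x \<in> X" "x \<notin> set C"
    using assms(6) unfolding tight_pair_def by auto
  have x_i: "E x (C ! (2 * i))" and x_j: "E x (C ! (2 * j))"
    using assms(11,12) unfolding nbhd_def by auto
  have "2 * i + 1 < length C" "2 * j + 1 < length C"
    using assms(8,9) by linarith+
  then have "E (C ! (2 * i)) (C ! (2 * i + 1))"
    using \<open>longest_cycle E C\<close> successively_nth
    by (fastforce simp: longest_cycle_def is_cycle_iff_successively)
  then have "z \<notin> X"
    using bipartite_graph_edge_side[OF assms(1)] x_i z_i \<open>x \<in> X\<close> by blast
  then have "x \<noteq> z"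
    using \<open>x \<in> X\<close> by blast
  show False
    using longest_cycle_no_crossing_neighbours[where p = "2 * i" and q = "2 * j",
        OF sym \<open>longest_cycle E C\<close> \<open>x \<notin> set C\<close> \<open>z \<notin> set C\<close> \<open>x \<noteq> z\<close>]
      \<open>i \<noteq> j\<close> \<open>2 * i + 1 < length C\<close> \<open>2 * j + 1 < length C\<close> x_i x_j z_i z_j
    by simp
qed

end
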